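(* Let $p \geq 2$, let $\Omega \subset \mathbb{R}^d$ be open, and let $f: \Omega \to \mathbb{R}$ be a non-negative function of class $C^p$ with zero set $\mathcal{Z}$. The following statements are equivalent: (i) for all $x_0 \in \mathcal{Z}$, $f$ satisfies the normal Hessian condition at $x_0$; (ii) $\mathcal{Z}$ is a (not necessarily connected) sub-manifold of $\mathbb{R}^d$ of class $C^1$ and $f$ is positive normally to $\mathcal{Z}$; (iii) $\mathcal{Z}$ is a (not necessarily connected) sub-manifold of $\mathbb{R}^d$ of class $C^{p-1}$ and $f$ is positive normally to $\mathcal{Z}$.
   Context: A subset $N \subset \mathbb{R}^d$ is a sub-manifold of $\mathbb{R}^d$ of class $C^k$ ($k \geq 1$) if for every $x \in N$ there is an integer $d_x$, an open neighborhood $U$ of $0$ in $\mathbb{R}^{d_x}$, an open set $V \subset \mathbb{R}^d$ and a $C^k$ map $\phi: U \to \mathbb{R}^d$ with $\phi(0)=x$, $\phi(U) = N \cap V$, $\phi: U \to \phi(U)$ a homeomorphism, and $d\phi(0)$ injective; $d_x$ is the (local) dimension of $N$ at $x$ and $T_xN = d\phi(0)(\mathbb{R}^{d_x})$. Normal Hessian condition at $x_0 \in \mathcal{Z}$: there exist $0 \le d_0 \le d$ and a sub-manifold $N$ of class $C^k$, $k\ge 1$, of dimension $d_0$ with $x_0 \in N \subset \mathcal{Z}$ such that $\nabla^2 f(x_0)$ has rank $d-d_0$. For a sub-manifold $N \subset \Omega$ of class $C^k$, $k\ge 1$, $f$ is positive normally to $N$ if (a) $df(x) = 0$ for all $x \in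 N$, and (b) for every $x_0 \in N$, with $d_0$ the local dimension of $N$ at $x_0$, there exists a linear subspace $S \subset \mathbb{R}^d$ of dimension $d-d_0$ such that the restriction $d^2 f(x_0)|_S$ is positive definite. *)

theory Defs
  imports "HOL-Analysis.Analysis"
begin

text \<open>C^k on a set U that is relatively open in a linear subspace S (U \<subseteq> S).
  For S = UNIV and U open this is the usual class C^k.\<close>
fun Ck_on :: "('a::real_normed_vector) set \<Rightarrow> nat \<Rightarrow> 'a set \<Rightarrow> ('a \<Rightarrow> 'b::real_normed_vector) \<Rightarrow> bool" where
  "Ck_on S 0 U g = continuous_on U g"
| "Ck_on S (Suc k) U g =
     (\<exists>g'. (\<forall>x\<in>U. (g has_derivative g' x) (at x within U)) \<and> (\<forall>v\<in>S. Ck_on S k U (\<lambda>x. g' x v)))"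

text \<open>A local chart of N at x of class C^k: the parameter domain R^{d_x} is represented
  by a linear subspace S of R^d of dimension d_x, U is an open neighbourhood of 0 in S.\<close>
definition is_chart :: "nat \<Rightarrow> ('a::euclidean_space) set \<Rightarrow> 'a \<Rightarrow> 'a set \<Rightarrow> 'a set \<Rightarrow> 'a set \<Rightarrow> ('a \<Rightarrow> 'a) \<Rightarrow> bool" where
  "is_chart k N x S U V \<phi> \<longleftrightarrow>
     subspace S \<and> U \<subseteq> S \<and> openin (top_of_set S) U \<and> 0 \<in> U \<and> open V \<and>
     Ck_on S k U \<phi> \<and> \<phi> 0 = x \<and> \<phi> ` U = N \<inter> V \<and>
     (\<exists>\<psi>. homeomorphism U (\<phi> ` U) \<phi> \<psi>) \<and>
     (\<exists>\<phi>'. (\<phi> has_derivative \<phi>') (at 0 within U) \<and> inj_on \<phi>' S)"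

definition submanifold :: "nat \<Rightarrow> ('a::euclidean_space) set \<Rightarrow> bool" where
  "submanifold k N \<longleftrightarrow> (\<forall>x\<in>N. \<exists>S U V \<phi>. is_chart k N x S U V \<phi>)"

definition local_dim_is :: "nat \<Rightarrow> ('a::euclidean_space) set \<Rightarrow> 'a \<Rightarrow> nat \<Rightarrow> bool" where
  "local_dim_is k N x m \<longleftrightarrow> (\<exists>S U V \<phi>. is_chart k N x S U V \<phi> \<and> dim S = m)"

definition zero_set :: "'a set \<Rightarrow> ('a \<Rightarrow> real) \<Rightarrow> 'a set" where
  "zero_set \<Omega> f = {x\<in>\<Omega>. f x = 0}"

definition d2 :: "('a::real_normed_vector \<Rightarrow> real) \<Rightarrow> 'a \<Rightarrow> 'a \<Rightarrow> 'a \<Rightarrow> real" where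
  "d2 f x v w = frechet_derivative (\<lambda>y. frechet_derivative f (at y) v) (at x) w"

definition hessian :: "(real^'n \<Rightarrow> real) \<Rightarrow> real^'n \<Rightarrow> real^'n^'n" where
  "hessian f x = (\<chi> i j. d2 f x (axis i 1) (axis j 1))"

definition normal_hessian_at :: "(real^'n) set \<Rightarrow> (real^'n \<Rightarrow> real) \<Rightarrow> real^'n \<Rightarrow> bool" where
  "normal_hessian_at \<Omega> f x0 \<longleftrightarrow>
     (\<exists>d0 k N. d0 \<le> CARD('n) \<and> k \<ge> 1 \<and> submanifold k N \<and> (\<forall>y\<in>N. local_dim_is k N y d0) \<and>
        x0 \<in> N \<and> N \<subseteq> zero_set \<Omega> f \<and> rank (hessian f x0) = CARD('n) - d0)"

definition positive_normally :: "nat \<Rightarrow> ('a::euclidean_space \<Rightarrow> real) \<Rightarrow> 'a set \<Rightarrow> bool" where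
  "positive_normally k f N \<longleftrightarrow>
     (\<forall>x\<in>N. (f has_derivative (\<lambda>v. 0)) (at x)) \<and>
     (\<forall>x0\<in>N. \<forall>d0. local_dim_is k N x0 d0 \<longrightarrow>
        (\<exists>T. subspace T \<and> dim T = DIM('a) - d0 \<and> (\<forall>v\<in>T. v \<noteq> 0 \<longrightarrow> d2 f x0 v v > 0)))"

end

theory Submission
  imports Defs
begin

(*
  At a zero x of the nonnegative function f the gradient vanishes and the Hessian is positive
  semidefinite, hence positive definite on the orthogonal complement of its kernel K(x).
  Differentiating \<nabla>f = 0 along a chart of Z shows that tangent vectors of Z lie in K(x), so
  every chart of Z at x has dimension at most dim K(x).  Conversely, suppose some chart of a piece
  of Z through x has dimension at least dim K(x); both the rank condition (i) and the positivity
  normal to Z in (ii) provide one.  With P a linear projection onto K(x), the map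
  F = P(. - x) + \<nabla>f is a C^(p-1) local diffeomorphism at x mapping Z into K(x), and invariance
  of domain shows that near x the set Z is the image under F^(-1) of an open subset of K(x).
  This gives a C^(p-1) chart of Z with parameter space K(x), and each of (i), (ii), (iii) is
  equivalent to the existence of such kernel charts at every zero of f.
*)

section \<open>Functions of class \<open>C\<^sup>k\<close>\<close>

lemma Ck_on_SucI:
  assumes "\<And>x. x \<in> U \<Longrightarrow> (g has_derivative g' x) (at x within U)"
    and "\<And>v. v \<in> S \<Longrightarrow> Ck_on S k U (\<lambda>x. g' x v)"
  shows "Ck_on S (Suc k) U g"
  using assms by auto

lemma Ck_on_Suc_imp_Ck_on: "Ck_on S (Suc k) U g \<Longrightarrow> Ck_on S k U g"
proof (induction k arbitrary: g)
  case 0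
  then show ?case by (auto intro: has_derivative_continuous_on)
next
  case (Suc k)
  then obtain g' where "\<forall>x\<in>U. (g has_derivative g' x) (at x within U)"
    and "\<forall>v\<in>S. Ck_on S (Suc k) U (\<lambda>x. g' x v)" by auto
  with Suc.IH show ?case by (intro Ck_on_SucI[where g' = g']) auto
qed

lemma Ck_on_mono: "Ck_on S k U g \<Longrightarrow> j \<le> k \<Longrightarrow> Ck_on S j U g"
  by (induction k) (simp, metis Ck_on_Suc_imp_Ck_on le_Suc_eq)

lemma Ck_on_subset: "Ck_on S k U g \<Longrightarrow> S' \<subseteq> S \<Longrightarrow> U' \<subseteq> U \<Longrightarrow> Ck_on S' k U' g"
proof (induction k arbitrary: g)
  case 0
  then show ?case by (auto intro: continuous_on_subset)
next
  case (Suc k)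
  then obtain g' where "\<forall>x\<in>U. (g has_derivative g' x) (at x within U)"
    and "\<forall>v\<in>S. Ck_on S k U (\<lambda>x. g' x v)" by auto
  with Suc show ?case by (intro Ck_on_SucI[where g' = g']) (auto intro: has_derivative_subset)
qed

lemma Ck_on_cong: "Ck_on S k U g \<Longrightarrow> (\<And>x. x \<in> U \<Longrightarrow> g x = h x) \<Longrightarrow> Ck_on S k U h"
proof (induction k arbitrary: g h)
  case 0
  then show ?case using continuous_on_cong by force
next
  case (Suc k)
  then obtain g' where "\<forall>x\<in>U. (g has_derivative g' x) (at x within U)"
    and "\<forall>v\<in>S. Ck_on S k U (\<lambda>x. g' x v)" by auto
  with Suc.prems(2) show ?case
    by (intro Ck_on_SucI[where g' = g']) (auto intro: has_derivative_transform[of _ U h g])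
qed

lemma Ck_on_const: "Ck_on S k U (\<lambda>x. c)"
proof (induction k arbitrary: c)
  case (Suc k)
  show ?case by (rule Ck_on_SucI[where g' = "\<lambda>x v. 0"]) (simp_all add: Suc.IH)
qed simp

lemma Ck_on_bounded_linear:
  assumes L: "bounded_linear L" and g: "Ck_on S k U g"
  shows "Ck_on S k U (\<lambda>x. L (g x))"
  using g
proof (induction k arbitrary: g)
  case 0
  then show ?case using L by (simp add: bounded_linear.continuous_on)
next
  case (Suc k)
  then obtain g' where "\<forall>x\<in>U. (g has_derivative g' x) (at x within U)"
    and "\<forall>v\<in>S. Ck_on S k U (\<lambda>x. g' x v)" by auto
  with Suc.IH show ?case
    by (intro Ck_on_SucI[where g' = "\<lambda>x v. L (g' x v)"])
      (auto intro: bounded_linear.has_derivative[OF L])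
qed

lemma Ck_on_add:
  assumes "Ck_on S k U g" "Ck_on S k U h"
  shows "Ck_on S k U (\<lambda>x. g x + h x)"
  using assms
proof (induction k arbitrary: g h)
  case 0
  then show ?case by (simp add: continuous_on_add)
next
  case (Suc k)
  from Suc.prems obtain g' h' where
    "\<forall>x\<in>U. (g has_derivative g' x) (at x within U)" "\<forall>v\<in>S. Ck_on S k U (\<lambda>x. g' x v)"
    "\<forall>x\<in>U. (h has_derivative h' x) (at x within U)" "\<forall>v\<in>S. Ck_on S k U (\<lambda>x. h' x v)"
    by auto
  with Suc.IH show ?case
    by (intro Ck_on_SucI[where g' = "\<lambda>x v. g' x v + h' x v"]) (auto intro: has_derivative_add)
qed

lemma Ck_on_sum:
  assumes "finite I" "\<And>i. i \<in> I \<Longrightarrow> Ck_on S k U (g i)"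
  shows "Ck_on S k U (\<lambda>x. \<Sum>i\<in>I. g i x)"
  using assms by (induction I rule: finite_induct) (simp_all add: Ck_on_const Ck_on_add)

lemma Ck_on_scaleR:
  fixes a :: "'a::real_normed_vector \<Rightarrow> real" and b :: "'a \<Rightarrow> 'b::real_normed_vector"
  assumes "Ck_on S k U a" "Ck_on S k U b"
  shows "Ck_on S k U (\<lambda>x. a x *\<^sub>R b x)"
  using assms
proof (induction k arbitrary: a b)
  case 0
  then show ?case by (simp add: continuous_on_scaleR)
next
  case (Suc k)
  from Suc.prems obtain a' b' where
    "\<forall>x\<in>U. (a has_derivative a' x) (at x within U)" and a': "\<forall>v\<in>S. Ck_on S k U (\<lambda>x. a' x v)"
    and "\<forall>x\<in>U. (b has_derivative b' x) (at x within U)" and b': "\<forall>v\<in>S. Ck_on S k U (\<lambda>x. b' x v)"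
    by auto
  moreover have "Ck_on S k U (\<lambda>x. a x *\<^sub>R b' x v + a' x v *\<^sub>R b x)" if "v \<in> S" for v
    using Suc.IH[OF Ck_on_Suc_imp_Ck_on[OF Suc.prems(1)]]
      Suc.IH[OF _ Ck_on_Suc_imp_Ck_on[OF Suc.prems(2)]]
      a' b' that by (simp add: Ck_on_add)
  ultimately show ?case
    by (intro Ck_on_SucI[where g' = "\<lambda>x v. a x *\<^sub>R b' x v + a' x v *\<^sub>R b x"])
      (auto intro: has_derivative_scaleR)
qed

lemma Ck_on_mult:
  fixes a b :: "'a::real_normed_vector \<Rightarrow> real"
  assumes "Ck_on S k U a" "Ck_on S k U b"
  shows "Ck_on S k U (\<lambda>x. a x * b x)"
  using Ck_on_scaleR[OF assms] by simp

lemma Ck_on_prod: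
  fixes g :: "'i \<Rightarrow> 'a::real_normed_vector \<Rightarrow> real"
  assumes "finite I" "\<And>i. i \<in> I \<Longrightarrow> Ck_on S k U (g i)"
  shows "Ck_on S k U (\<lambda>x. \<Prod>i\<in>I. g i x)"
  using assms by (induction I rule: finite_induct) (simp_all add: Ck_on_const Ck_on_mult)

lemma Ck_on_inverse:
  fixes d :: "'a::real_normed_vector \<Rightarrow> real"
  assumes "Ck_on S k U d" "\<And>x. x \<in> U \<Longrightarrow> d x \<noteq> 0"
  shows "Ck_on S k U (\<lambda>x. inverse (d x))"
  using assms
proof (induction k arbitrary: d)
  case 0
  then show ?case by (auto intro!: continuous_on_inverse)
next
  case (Suc k)
  from Suc.prems obtain d' where d: "\<forall>x\<in>U. (d has_derivative d' x) (at x within U)"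
    and d': "\<forall>v\<in>S. Ck_on S k U (\<lambda>x. d' x v)" by auto
  have inv: "Ck_on S k U (\<lambda>x. inverse (d x))"
    using Suc.IH Suc.prems(2) Ck_on_Suc_imp_Ck_on[OF Suc.prems(1)] by blast
  show ?case
  proof (rule Ck_on_SucI[where g' = "\<lambda>x v. - (inverse (d x) * d' x v * inverse (d x))"])
    show "((\<lambda>x. inverse (d x)) has_derivative (\<lambda>v. - (inverse (d x) * d' x v * inverse (d x))))
      (at x within U)" if "x \<in> U" for x
      using d Suc.prems(2) that by (simp add: has_derivative_inverse)
    show "Ck_on S k U (\<lambda>x. - (inverse (d x) * d' x v * inverse (d x)))" if "v \<in> S" for v
      using Ck_on_bounded_linear[OF bounded_linear_minus[OF bounded_linear_ident]
          Ck_on_mult[OF Ck_on_mult[OF inv] inv]] d' that by blast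
  qed
qed

lemma linear_eq_sum_Basis:
  fixes L :: "'a::euclidean_space \<Rightarrow> 'b::real_vector"
  assumes "linear L"
  shows "L w = (\<Sum>i\<in>Basis. (w \<bullet> i) *\<^sub>R L i)"
proof -
  have "L w = L (\<Sum>i\<in>Basis. (w \<bullet> i) *\<^sub>R i)"
    by (simp add: euclidean_representation)
  also have "\<dots> = (\<Sum>i\<in>Basis. (w \<bullet> i) *\<^sub>R L i)"
    using assms by (simp add: linear_sum linear_scale)
  finally show ?thesis .
qed

lemma Ck_on_compose:
  fixes h :: "'a::real_normed_vector \<Rightarrow> 'c::euclidean_space" and g :: "'c \<Rightarrow> 'b::real_normed_vector"
  assumes "Ck_on S k U h" "Ck_on UNIV k W g" "open W" "h ` U \<subseteq> W"
  shows "Ck_on S k U (\<lambda>x. g (h x))"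
  using assms(1,2,4)
proof (induction k arbitrary: g h)
  case 0
  then show ?case by (auto intro: continuous_on_compose2)
next
  case (Suc k)
  from Suc.prems(1) obtain h' where dh: "\<forall>x\<in>U. (h has_derivative h' x) (at x within U)"
    and ch: "\<forall>v\<in>S. Ck_on S k U (\<lambda>x. h' x v)" by auto
  from Suc.prems(2) obtain g' where dg: "\<forall>y\<in>W. (g has_derivative g' y) (at y within W)"
    and cg: "\<forall>v. Ck_on UNIV k W (\<lambda>y. g' y v)" by auto
  have dg_at: "(g has_derivative g' y) (at y)" if "y \<in> W" for y
    using dg that at_within_open[OF that assms(3)] by metis
  have hk: "Ck_on S k U h" by (rule Ck_on_Suc_imp_Ck_on[OF Suc.prems(1)])
  show ?case
  proof (rule Ck_on_SucI[where g' = "\<lambda>x v. g' (h x) (h' x v)"])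
    fix x assume "x \<in> U"
    then show "((\<lambda>x. g (h x)) has_derivative (\<lambda>v. g' (h x) (h' x v))) (at x within U)"
      using has_derivative_compose[OF dh[rule_format] dg_at] Suc.prems(3) by blast
  next
    fix v assume v: "v \<in> S"
    \<comment> \<open>expand the linear map \<open>g' (h x)\<close> in a basis so that only the IH for \<open>g' y i\<close> is needed\<close>
    have "Ck_on S k U (\<lambda>x. \<Sum>i\<in>Basis. (h' x v \<bullet> i) *\<^sub>R g' (h x) i)"
    proof (intro Ck_on_sum Ck_on_scaleR finite_Basis)
      fix i :: 'c
      show "Ck_on S k U (\<lambda>x. h' x v \<bullet> i)"
        using Ck_on_bounded_linear[OF bounded_linear_inner_left] ch v by blast
      show "Ck_on S k U (\<lambda>x. g' (h x) i)"
        using Suc.IH[OF hk cg[rule_format] Suc.prems(3)] .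
    qed
    then show "Ck_on S k U (\<lambda>x. g' (h x) (h' x v))"
    proof (rule Ck_on_cong)
      fix x assume "x \<in> U"
      then have "linear (g' (h x))"
        using dg_at Suc.prems(3) has_derivative_linear by blast
      then show "(\<Sum>i\<in>Basis. (h' x v \<bullet> i) *\<^sub>R g' (h x) i) = g' (h x) (h' x v)"
        by (simp add: linear_eq_sum_Basis[symmetric])
    qed
  qed
qed

lemma vec_lambda_eq_sum_axis: "(\<chi> i. c i) = (\<Sum>i\<in>UNIV. c i *\<^sub>R axis i 1)"
  using basis_expansion[of "\<chi> i. c i"] by (simp add: scalar_mult_eq_scaleR)

lemma Ck_on_vec_lambda:
  fixes c :: "'n::finite \<Rightarrow> 'a::real_normed_vector \<Rightarrow> real"
  assumes "\<And>i. Ck_on S k U (c i)"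
  shows "Ck_on S k U (\<lambda>x. \<chi> i. c i x)"
proof -
  have "Ck_on S k U (\<lambda>x. \<Sum>i\<in>UNIV. c i x *\<^sub>R axis i 1)"
    by (intro Ck_on_sum Ck_on_scaleR assms Ck_on_const finite)
  then show ?thesis
    by (rule Ck_on_cong) (simp add: vec_lambda_eq_sum_axis)
qed

lemma Ck_on_det:
  fixes M :: "'a::real_normed_vector \<Rightarrow> real^'n^'n"
  assumes "\<And>i j. Ck_on S k U (\<lambda>x. M x $ i $ j)"
  shows "Ck_on S k U (\<lambda>x. det (M x))"
  unfolding det_def
  by (intro Ck_on_sum Ck_on_mult Ck_on_const Ck_on_prod assms finite_permutations finite)

text \<open>Cramer's rule writes the inverse of a linear map through determinants of its matrix.\<close>
lemma Ck_on_inv_linear: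
  fixes L :: "'a::real_normed_vector \<Rightarrow> real^'n \<Rightarrow> real^'n"
  assumes L: "\<And>v. Ck_on S k U (\<lambda>x. L x v)"
    and lin: "\<And>x. x \<in> U \<Longrightarrow> linear (L x)" and bij: "\<And>x. x \<in> U \<Longrightarrow> bij (L x)"
  shows "Ck_on S k U (\<lambda>x. inv (L x) b)"
proof -
  let ?A = "\<lambda>x. matrix (L x)"
  have entries: "Ck_on S k U (\<lambda>x. ?A x $ i $ j)" for i j
    unfolding matrix_def using Ck_on_bounded_linear[OF bounded_linear_vec_nth L] by simp
  have cramer_entries: "Ck_on S k U (\<lambda>x. if l = j then b $ i else ?A x $ i $ l)" for i j l
    by (cases "l = j") (simp_all add: entries Ck_on_const)
  have det: "det (?A x) \<noteq> 0" if "x \<in> U" for x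
    using det_nz_iff_inj lin bij bij_is_inj that by blast
  have "Ck_on S k U
      (\<lambda>x. \<chi> j. det (\<chi> i l. if l = j then b $ i else ?A x $ i $ l) * inverse (det (?A x)))"
    using det by (intro Ck_on_vec_lambda Ck_on_mult Ck_on_det Ck_on_inverse)
      (simp_all add: entries cramer_entries)
  then show ?thesis
  proof (rule Ck_on_cong)
    fix x assume x: "x \<in> U"
    have "?A x *v inv (L x) b = b"
      using bij[OF x] lin[OF x] by (simp add: matrix_works bij_is_surj surj_f_inv_f)
    then show "(\<chi> j. det (\<chi> i l. if l = j then b $ i else ?A x $ i $ l) * inverse (det (?A x)))
        = inv (L x) b"
      using cramer[OF det[OF x]] by (simp add: divide_inverse)
  qed
qed

lemma Ck_on_inverse_function:
  fixes F g :: "real^'n \<Rightarrow> real^'n" and F' :: "real^'n \<Rightarrow> real^'n \<Rightarrow> real^'n"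
  assumes U': "open U'" and hom: "homeomorphism U' V F g"
    and dg: "\<And>y. y \<in> V \<Longrightarrow> (g has_derivative inv (F' (g y))) (at y)"
    and lin: "\<And>x. x \<in> U' \<Longrightarrow> linear (F' x)" and bij: "\<And>x. x \<in> U' \<Longrightarrow> bij (F' x)"
    and F': "\<And>v. Ck_on UNIV m U' (\<lambda>x. F' x v)"
  shows "Ck_on UNIV (Suc m) V g"
proof -
  have gV: "g ` V = U'"
    using hom by (simp add: homeomorphism_def)
  have "Ck_on UNIV j V g" if "j \<le> Suc m" for j
    using that
  proof (induction j)
    case 0
    then show ?case
      using hom by (simp add: homeomorphism_def)
  next
    case (Suc j)
    then have g: "Ck_on UNIV j V g"
      by simp
    have "Ck_on UNIV j V (\<lambda>y. F' (g y) v)" for v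
      using Ck_on_compose[OF g Ck_on_mono[OF F'] U'] gV Suc.prems by simp
    then have "Ck_on UNIV j V (\<lambda>y. inv (F' (g y)) v)" for v
      using lin bij gV by (intro Ck_on_inv_linear) auto
    then show ?case
      using dg by (intro Ck_on_SucI[where g' = "\<lambda>y. inv (F' (g y))"])
        (auto intro: has_derivative_at_withinI)
  qed
  then show ?thesis
    by blast
qed

lemma Ck_on_Suc_open_frechet_derivative:
  assumes g: "Ck_on UNIV (Suc k) U g" and U: "open U"
  shows "\<And>x. x \<in> U \<Longrightarrow> (g has_derivative frechet_derivative g (at x)) (at x)"
    and "\<And>v. Ck_on UNIV k U (\<lambda>x. frechet_derivative g (at x) v)"
proof -
  from g obtain g' where dg: "\<forall>x\<in>U. (g has_derivative g' x) (at x within U)"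
    and cg: "\<forall>v. Ck_on UNIV k U (\<lambda>x. g' x v)" by auto
  have at: "(g has_derivative g' x) (at x)" if "x \<in> U" for x
    using dg that at_within_open[OF that U] by metis
  then have eq: "frechet_derivative g (at x) = g' x" if "x \<in> U" for x
    using that frechet_derivative_at by metis
  show "(g has_derivative frechet_derivative g (at x)) (at x)" if "x \<in> U" for x
    using at eq that by simp
  show "Ck_on UNIV k U (\<lambda>x. frechet_derivative g (at x) v)" for v
    using Ck_on_cong[OF cg[rule_format, of v]] eq by simp
qed

section \<open>Charts\<close>

lemma is_chart_center: "is_chart k N x S U V \<phi> \<Longrightarrow> x \<in> N \<inter> V"
  unfolding is_chart_def by (metis image_eqI)

lemma is_chart_mono: "is_chart k N x S U V \<phi> \<Longrightarrow> j \<le> k \<Longrightarrow> is_chart j N x S U V \<phi>"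
  unfolding is_chart_def using Ck_on_mono by blast

lemma is_chart_restrict:
  assumes c: "is_chart k N y S U V \<phi>" and Ob: "open Ob" "y \<in> Ob"
  shows "is_chart k (N \<inter> Ob) y S (U \<inter> \<phi> -` Ob) (V \<inter> Ob) \<phi>"
proof -
  obtain \<psi> where h: "homeomorphism U (\<phi> ` U) \<phi> \<psi>"
    using c unfolding is_chart_def by blast
  obtain \<phi>' where d: "(\<phi> has_derivative \<phi>') (at 0 within U)" "inj_on \<phi>' S"
    using c unfolding is_chart_def by blast
  have c': "subspace S" "U \<subseteq> S" "openin (top_of_set S) U" "0 \<in> U" "open V" "Ck_on S k U \<phi>"
    "\<phi> 0 = y" "\<phi> ` U = N \<inter> V"
    using c unfolding is_chart_def by auto
  have "openin (top_of_set S) (U \<inter> \<phi> -` Ob)"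
    using continuous_openin_preimage_gen[OF homeomorphism_cont1[OF h] Ob(1)] c'(3) openin_trans
    by blast
  moreover have "\<phi> ` (U \<inter> \<phi> -` Ob) = N \<inter> Ob \<inter> (V \<inter> Ob)"
  proof -
    have "\<phi> ` (U \<inter> \<phi> -` Ob) = \<phi> ` U \<inter> Ob" by auto
    then show ?thesis using c'(8) by auto
  qed
  moreover have "homeomorphism (U \<inter> \<phi> -` Ob) (\<phi> ` (U \<inter> \<phi> -` Ob)) \<phi> \<psi>"
    by (rule homeomorphism_of_subsets[OF h _ order_refl]) auto
  moreover have "(\<phi> has_derivative \<phi>') (at 0 within U \<inter> \<phi> -` Ob)"
    using has_derivative_subset[OF d(1)] by blast
  moreover have "Ck_on S k (U \<inter> \<phi> -` Ob) \<phi>"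
    using Ck_on_subset[OF c'(6)] by blast
  ultimately show ?thesis
    unfolding is_chart_def using c' d(2) Ob by auto
qed

text \<open>The transition map \<open>\<psi>' \<circ> \<phi>\<close> is a continuous injection of an open subset of \<open>S\<close> into
  \<open>S'\<close>, so invariance of dimension applies.\<close>
lemma is_chart_dim_le:
  assumes c1: "is_chart k N x S U V \<phi>" and c2: "is_chart k' N x' S' U' V' \<phi>'"
    and y: "y \<in> N \<inter> V \<inter> V'"
  shows "dim S \<le> dim S'"
proof -
  obtain \<psi>' where h2: "homeomorphism U' (\<phi>' ` U') \<phi>' \<psi>'"
    using c2 unfolding is_chart_def by blast
  obtain \<psi> where h1: "homeomorphism U (\<phi> ` U) \<phi> \<psi>"
    using c1 unfolding is_chart_def by blast
  have S: "subspace S" "openin (top_of_set S) U" "\<phi> ` U = N \<inter> V"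
    using c1 unfolding is_chart_def by auto
  have S': "subspace S'" "U' \<subseteq> S'" "\<phi>' ` U' = N \<inter> V'" "open V'"
    using c2 unfolding is_chart_def by auto
  define D where "D = U \<inter> \<phi> -` V'"
  have oD: "openin (top_of_set S) D"
    unfolding D_def using continuous_openin_preimage_gen[OF homeomorphism_cont1[OF h1] S'(4)] S(2)
    openin_trans by blast
  have phiD: "\<phi> ` D \<subseteq> \<phi>' ` U'"
    using S(3) S'(3) by (auto simp: D_def)
  have "continuous_on D (\<psi>' \<circ> \<phi>)"
    using continuous_on_compose[OF continuous_on_subset[OF homeomorphism_cont1[OF h1]]
        continuous_on_subset[OF homeomorphism_cont2[OF h2] phiD]] by (simp add: D_def)
  moreover have "\<psi>' \<circ> \<phi> \<in> D \<rightarrow> S'"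
    using phiD homeomorphism_image2[OF h2] S'(2) by fastforce
  moreover have "inj_on (\<psi>' \<circ> \<phi>) D"
    using phiD homeomorphism_apply1[OF h1] homeomorphism_apply2[OF h2] unfolding D_def
    by (smt (verit) IntD1 comp_apply image_subset_iff inj_onI)
  moreover have "D \<noteq> {}"
    using y S(3) by (force simp: D_def)
  ultimately show ?thesis
    by (intro invariance_of_dimension_subspaces[OF oD S(1) S'(1)])
qed

lemma is_chart_dim_eq:
  assumes "is_chart k N x S U V \<phi>" and "is_chart k' N x' S' U' V' \<phi>'"
    and "y \<in> N \<inter> V \<inter> V'"
  shows "dim S = dim S'"
  using is_chart_dim_le[OF assms] is_chart_dim_le[OF assms(2,1)] assms(3)
  by (simp add: Int_ac le_antisym)

lemma openin_image_compose_injective: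
  fixes \<phi> :: "'a::euclidean_space \<Rightarrow> 'b::euclidean_space" and F :: "'b \<Rightarrow> 'c::euclidean_space"
  assumes S: "subspace S" "openin (top_of_set S) U"
    and \<phi>: "continuous_on U \<phi>" "inj_on \<phi> U"
    and F: "open U'" "continuous_on U' F" "inj_on F U'"
    and K: "subspace K" "F ` (\<phi> ` U \<inter> U') \<subseteq> K" "dim K \<le> dim S"
  shows "openin (top_of_set K) (F ` (\<phi> ` U \<inter> U'))"
proof -
  define D where "D = U \<inter> \<phi> -` U'"
  have "openin (top_of_set S) D"
    unfolding D_def using continuous_openin_preimage_gen[OF \<phi>(1) F(1)] S(2) openin_trans by blast
  moreover have "continuous_on D (F \<circ> \<phi>)"
    using continuous_on_compose[OF continuous_on_subset[OF \<phi>(1)] continuous_on_subset[OF F(2)]]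
    by (auto simp: D_def)
  moreover have "F \<circ> \<phi> \<in> D \<rightarrow> K"
    using K(2) by (auto simp: D_def)
  moreover have "inj_on (F \<circ> \<phi>) D"
    by (rule comp_inj_on[OF inj_on_subset[OF \<phi>(2)] inj_on_subset[OF F(3)]]) (auto simp: D_def)
  ultimately have "openin (top_of_set K) ((F \<circ> \<phi>) ` D)"
    by (rule invariance_of_domain_subspaces[OF _ S(1) K(1,3)])
  moreover have "(F \<circ> \<phi>) ` D = F ` (\<phi> ` U \<inter> U')"
    by (auto simp: D_def)
  ultimately show ?thesis
    by simp
qed

lemma homeomorphism_image_slice:
  assumes hom: "homeomorphism U' V F g"
    and "K \<inter> Q \<subseteq> F ` (N \<inter> U')" and "F ` (N \<inter> U') \<subseteq> K"
  shows "g ` (K \<inter> V \<inter> Q) = N \<inter> (U' \<inter> F -` Q)"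
proof
  have gF: "\<And>z. z \<in> U' \<Longrightarrow> g (F z) = z" and FU': "F ` U' = V"
    using hom by (auto simp: homeomorphism_def)
  show "g ` (K \<inter> V \<inter> Q) \<subseteq> N \<inter> (U' \<inter> F -` Q)"
  proof
    fix z assume "z \<in> g ` (K \<inter> V \<inter> Q)"
    then obtain y where y: "y \<in> K \<inter> V \<inter> Q" "z = g y"
      by blast
    then obtain w where "w \<in> N \<inter> U'" "y = F w"
      using assms(2) by blast
    then show "z \<in> N \<inter> (U' \<inter> F -` Q)"
      using y gF by simp
  qed
  show "N \<inter> (U' \<inter> F -` Q) \<subseteq> g ` (K \<inter> V \<inter> Q)"
  proof
    fix z assume z: "z \<in> N \<inter> (U' \<inter> F -` Q)"
    then have "F z \<in> K \<inter> V \<inter> Q"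
      using assms(3) FU' by blast
    then show "z \<in> g ` (K \<inter> V \<inter> Q)"
      using gF z by (metis IntD1 IntD2 image_eqI)
  qed
qed

lemma is_chart_straightening:
  fixes F g :: "'a::euclidean_space \<Rightarrow> 'a"
  assumes K: "subspace K" and hom: "homeomorphism U' V F g" "open U'" "open V"
    and Q: "open Q" "0 \<in> Q" "K \<inter> Q \<subseteq> F ` (N \<inter> U')" and FN: "F ` (N \<inter> U') \<subseteq> K"
    and x: "x \<in> U'" "F x = 0"
    and g: "Ck_on UNIV k V g" "(g has_derivative g') (at 0)" "inj_on g' K"
  shows "is_chart k N x K (K \<inter> V \<inter> Q) (U' \<inter> F -` Q) g"
proof -
  have gF: "\<And>z. z \<in> U' \<Longrightarrow> g (F z) = z" and FU': "F ` U' = V" and contF: "continuous_on U' F"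
    using hom(1) by (auto simp: homeomorphism_def)
  have g0: "g 0 = x"
    using gF[OF x(1)] x(2) by simp
  have "0 \<in> V"
    using x FU' by force
  then have A: "0 \<in> K \<inter> V \<inter> Q"
    using K Q(2) subspace_0 by blast
  have "g ` (K \<inter> V \<inter> Q) = N \<inter> (U' \<inter> F -` Q)"
    by (rule homeomorphism_image_slice[OF hom(1) Q(3) FN])
  moreover have "homeomorphism (K \<inter> V \<inter> Q) (g ` (K \<inter> V \<inter> Q)) g F"
    by (rule homeomorphism_of_subsets[OF homeomorphism_symD[OF hom(1)]]) auto
  moreover have "Ck_on K k (K \<inter> V \<inter> Q) g"
    by (rule Ck_on_subset[OF g(1) subset_UNIV]) blast
  moreover have "(g has_derivative g') (at 0 within K \<inter> V \<inter> Q)"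
    by (rule has_derivative_at_withinI[OF g(2)])
  moreover have "openin (top_of_set K) (K \<inter> V \<inter> Q)"
    unfolding Int_assoc using hom(3) Q(1) by (intro openin_open_Int open_Int)
  moreover have "open (U' \<inter> F -` Q)"
    by (rule continuous_open_preimage[OF contF hom(2) Q(1)])
  ultimately show ?thesis
    unfolding is_chart_def using K A g0 g(3) by (intro conjI exI) auto
qed

lemma mvt_ray:
  fixes g :: "'a::real_normed_vector \<Rightarrow> real"
  assumes s: "0 < s"
    and dg: "\<And>t. 0 \<le> t \<Longrightarrow> t \<le> s \<Longrightarrow> (g has_derivative g' (x + t *\<^sub>R u)) (at (x + t *\<^sub>R u))"
  obtains \<xi> where "0 < \<xi>" "\<xi> < s" "g (x + s *\<^sub>R u) - g x = s * g' (x + \<xi> *\<^sub>R u) u"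
proof -
  have "((\<lambda>t. g (x + t *\<^sub>R u)) has_real_derivative g' (x + t *\<^sub>R u) u) (at t)"
    if "0 \<le> t" "t \<le> s" for t
  proof -
    have "((\<lambda>t. x + t *\<^sub>R u) has_derivative (\<lambda>h. h *\<^sub>R u)) (at t)"
      by (auto intro!: derivative_eq_intros)
    from has_derivative_compose[OF this dg[OF that]]
    show ?thesis
      by (rule has_derivative_imp_has_field_derivative)
        (simp add: linear_scale[OF has_derivative_linear[OF dg[OF that]]])
  qed
  from MVT2[OF s this] obtain \<xi> where "0 < \<xi>" "\<xi> < s"
    "g (x + s *\<^sub>R u) - g (x + 0 *\<^sub>R u) = (s - 0) * g' (x + \<xi> *\<^sub>R u) u" by blast
  then show ?thesis using that by simp
qed

lemma norm_scaleR_add_le: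
  fixes v w :: "'a::real_normed_vector"
  assumes "0 \<le> a" "a \<le> s" "0 \<le> b" "b \<le> s"
  shows "norm (a *\<^sub>R v + b *\<^sub>R w) \<le> (norm v + norm w) * s"
proof -
  have "norm (a *\<^sub>R v + b *\<^sub>R w) \<le> a * norm v + b * norm w"
    using norm_triangle_ineq[of "a *\<^sub>R v" "b *\<^sub>R w"] assms by simp
  also have "\<dots> \<le> s * norm v + s * norm w"
    using assms by (intro add_mono mult_right_mono) auto
  finally show ?thesis
    by (simp add: algebra_simps)
qed

lemma eventually_at_right_0_parallelogram_in_open:
  fixes x :: "'a::real_normed_vector"
  assumes "open \<Omega>" "x \<in> \<Omega>"
  shows "\<forall>\<^sub>F s in at_right 0. \<forall>a b. 0 \<le> a \<longrightarrow> a \<le> s \<longrightarrow> 0 \<le> b \<longrightarrow> b \<le> s \<longrightarrow>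
    x + a *\<^sub>R v + b *\<^sub>R w \<in> \<Omega>"
proof -
  obtain r where r: "r > 0" "ball x r \<subseteq> \<Omega>"
    using assms open_contains_ball by blast
  define c where "c = norm v + norm w + 1"
  have c: "c > 0" by (simp add: c_def add_nonneg_pos)
  have inside: "x + a *\<^sub>R v + b *\<^sub>R w \<in> \<Omega>"
    if "0 < s" "s < r / c" "0 \<le> a" "a \<le> s" "0 \<le> b" "b \<le> s" for s a b
  proof -
    have "norm (a *\<^sub>R v + b *\<^sub>R w) \<le> (norm v + norm w) * s"
      using norm_scaleR_add_le that(3-6) by blast
    also have "\<dots> \<le> s * c"
      using that by (simp add: c_def algebra_simps)
    also have "\<dots> < r"
      using that c by (simp add: pos_less_divide_eq)
    finally have "dist (x + a *\<^sub>R v + b *\<^sub>R w) x < r"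
      by (simp add: dist_norm)
    then show ?thesis
      using r by (metis mem_ball dist_commute subsetD)
  qed
  have "\<forall>\<^sub>F s in at_right 0. s \<in> {0<..<r / c}"
    using r c by (intro eventually_at_right_real) simp
  then show ?thesis
    by (rule eventually_mono) (auto intro: inside)
qed

lemma obtain_nearby_values_tendsto:
  fixes x :: "'a::real_normed_vector"
  assumes h: "continuous (at x within A) h"
    and ev: "\<forall>\<^sub>F s in at_right 0. \<exists>y\<in>A. norm (y - x) \<le> C * s \<and> P s (h y)"
  obtains q where "\<forall>\<^sub>F s in at_right (0::real). P s (q s)" and "(q \<longlongrightarrow> h x) (at_right 0)"
proof
  define y where "y s = (SOME y. y \<in> A \<and> norm (y - x) \<le> C * s \<and> P s (h y))" for s
  have "\<forall>\<^sub>F s in at_right 0. y s \<in> A \<and> norm (y s - x) \<le> C * s \<and> P s (h (y s))"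
    using ev unfolding y_def by (rule eventually_mono) (metis (mono_tags, lifting) someI_ex)
  then have yA: "\<forall>\<^sub>F s in at_right 0. y s \<in> A"
    and y_near: "\<forall>\<^sub>F s in at_right 0. norm (y s - x) \<le> C * s"
    and "\<forall>\<^sub>F s in at_right 0. P s (h (y s))"
    by (simp_all add: eventually_conj_iff)
  then show "\<forall>\<^sub>F s in at_right 0. P s ((h \<circ> y) s)"
    by simp
  from y_near have "((\<lambda>s. y s - x) \<longlongrightarrow> 0) (at_right 0)"
    by (rule Lim_null_comparison) (rule tendsto_mult_right_zero[OF tendsto_ident_at])
  then have "(y \<longlongrightarrow> x) (at_right 0)"
    by (rule LIM_zero_cancel)
  from continuous_within_tendsto_compose[OF h yA this]
  show "((h \<circ> y) \<longlongrightarrow> h x) (at_right 0)"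
    by (simp add: o_def)
qed

lemma quadratic_nonneg_imp_linear_coeff_zero:
  fixes a c :: real
  assumes h: "\<And>t. 0 \<le> 2 * t * a + t * t * c" and c: "c \<ge> 0"
  shows "a = 0"
proof (rule ccontr)
  assume a: "a \<noteq> 0"
  define t where "t = - a / (c + 1)"
  have tc: "t * (c + 1) = - a"
    unfolding t_def using c by simp
  have "0 \<le> 2 * t * a + t * (t * c)"
    using h[of t] by (simp add: mult.assoc)
  also have "t * c = - a - t"
    using tc by (simp add: algebra_simps)
  finally have "0 \<le> t * (a - t)"
    by (simp add: algebra_simps)
  moreover have "t * (a - t) < 0"
  proof (cases "a > 0")
    case True
    then have "t < 0"
      unfolding t_def using c by (simp add: divide_pos_pos)
    then show ?thesis
      using True by (simp add: mult_neg_pos)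
  next
    case False
    then have "t > 0"
      unfolding t_def using a c by (simp add: divide_neg_pos)
    then show ?thesis
      using False a by (simp add: mult_pos_neg)
  qed
  ultimately show False
    by simp
qed

lemma linear_eq_sum_axis:
  fixes L :: "real^'n \<Rightarrow> real"
  assumes "linear L"
  shows "L v = (\<Sum>i\<in>UNIV. v $ i * L (axis i 1))"
proof -
  have "L v = L (\<Sum>i\<in>UNIV. v $ i *\<^sub>R axis i 1)"
    using basis_expansion[of v] by (simp add: scalar_mult_eq_scaleR)
  also have "\<dots> = (\<Sum>i\<in>UNIV. v $ i * L (axis i 1))"
    using assms by (simp add: linear_sum linear_scale)
  finally show ?thesis .
qed

lemma dim_orthogonal_comp_add:
  fixes A :: "'a::euclidean_space set"
  assumes "subspace A"
  shows "dim (A\<^sup>\<bottom>) + dim A = DIM('a)"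
  using dim_subspace_orthogonal_to_vectors[OF assms subspace_UNIV]
  by (simp add: orthogonal_comp_def dim_UNIV)

lemma obtain_linear_projection:
  fixes A :: "'a::euclidean_space set"
  assumes A: "subspace A"
  obtains P where "linear P" "\<And>v. P v \<in> A" "\<And>a. a \<in> A \<Longrightarrow> P a = a"
proof -
  obtain B where B: "B \<subseteq> A" "pairwise orthogonal B" "\<And>x. x \<in> B \<Longrightarrow> norm x = 1"
    "independent B" "span B = A"
    using orthonormal_basis_subspace[OF A] by metis
  have fin: "finite B"
    using B(4) independent_imp_finite by blast
  define P where "P v = (\<Sum>b\<in>B. (v \<bullet> b) *\<^sub>R b)" for v
  have "linear P"
    unfolding P_def
    by (rule linearI) (simp_all add: inner_add_left scaleR_add_left sum.distrib scaleR_sum_right)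
  moreover have "P v \<in> A" for v
    unfolding P_def using B(1) A by (intro subspace_sum subspace_scale) auto
  moreover have "P a = a" if "a \<in> A" for a
    unfolding P_def using orthonormal_basis_expand[OF B(2,3)] that B(5) fin by auto
  ultimately show ?thesis
    using that by blast
qed

section \<open>Second derivatives of a nonnegative function at its zeros\<close>

locale nonneg_Cp_function =
  fixes \<Omega> :: "(real^'n) set" and f :: "real^'n \<Rightarrow> real" and p :: nat
  assumes p_ge_2: "p \<ge> 2" and open_domain: "open \<Omega>" and nonneg: "\<forall>x\<in>\<Omega>. f x \<ge> 0"
    and smooth: "Ck_on UNIV p \<Omega> f"
begin

abbreviation Z :: "(real^'n) set" where "Z \<equiv> zero_set \<Omega> f"

abbreviation Df :: "real^'n \<Rightarrow> real^'n \<Rightarrow> real" where "Df x \<equiv> frechet_derivative f (at x)"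

lemma Z_subset: "Z \<subseteq> \<Omega>"
  by (auto simp: zero_set_def)

lemma
  shows has_derivative_f: "\<And>x. x \<in> \<Omega> \<Longrightarrow> (f has_derivative Df x) (at x)"
    and has_derivative_Df: "\<And>x v. x \<in> \<Omega> \<Longrightarrow> ((\<lambda>y. Df y v) has_derivative d2 f x v) (at x)"
    and Ck_on_d2: "\<And>v w. Ck_on UNIV (p - 2) \<Omega> (\<lambda>x. d2 f x v w)"
proof -
  obtain q where p: "p = Suc (Suc q)"
    using p_ge_2 by (metis add_2_eq_Suc le_Suc_ex)
  note first = Ck_on_Suc_open_frechet_derivative[OF smooth[unfolded p] open_domain]
  note second = Ck_on_Suc_open_frechet_derivative[OF first(2) open_domain]
  have d2_eq: "d2 f x v = frechet_derivative (\<lambda>y. Df y v) (at x)" for x v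
    by (simp add: d2_def fun_eq_iff)
  show "\<And>x. x \<in> \<Omega> \<Longrightarrow> (f has_derivative Df x) (at x)"
    and "\<And>x v. x \<in> \<Omega> \<Longrightarrow> ((\<lambda>y. Df y v) has_derivative d2 f x v) (at x)"
    and "\<And>v w. Ck_on UNIV (p - 2) \<Omega> (\<lambda>x. d2 f x v w)"
    using first second by (simp_all add: p d2_eq)
qed

lemma continuous_d2: "x \<in> \<Omega> \<Longrightarrow> continuous (at x within \<Omega>) (\<lambda>x. d2 f x v w)"
  using Ck_on_mono[OF Ck_on_d2, of 0] by (simp add: continuous_on_eq_continuous_within)

lemma linear_d2: "x \<in> \<Omega> \<Longrightarrow> linear (d2 f x v)"
  using has_derivative_Df has_derivative_linear by blast

lemma Df_zero:
  assumes "x \<in> Z"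
  shows "Df x = (\<lambda>v. 0)"
proof -
  have x: "x \<in> \<Omega>" and "f x = 0"
    using assms by (auto simp: zero_set_def)
  then show ?thesis
    by (intro differential_zero_maxmin[OF x open_domain has_derivative_f[OF x]])
      (use nonneg in auto)
qed

definition second_difference :: "real^'n \<Rightarrow> real^'n \<Rightarrow> real^'n \<Rightarrow> real \<Rightarrow> real" where
  "second_difference x v w s = f (x + s *\<^sub>R v + s *\<^sub>R w) - f (x + s *\<^sub>R v) - f (x + s *\<^sub>R w) + f x"

lemma second_difference_mvt:
  assumes x: "x \<in> \<Omega>" and s: "0 < s"
    and inside: "\<And>a b. 0 \<le> a \<Longrightarrow> a \<le> s \<Longrightarrow> 0 \<le> b \<Longrightarrow> b \<le> s \<Longrightarrow> x + a *\<^sub>R v + b *\<^sub>R w \<in> \<Omega>"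
  obtains a b where "0 < a" "a < s" "0 < b" "b < s"
    "second_difference x v w s = s * s * d2 f (x + a *\<^sub>R v + b *\<^sub>R w) v w"
proof -
  define g where "g y = f (y + s *\<^sub>R w) - f y" for y
  obtain a where a: "0 < a" "a < s"
    and mvt1: "g (x + s *\<^sub>R v) - g x = s * (Df (x + a *\<^sub>R v + s *\<^sub>R w) v - Df (x + a *\<^sub>R v) v)"
  proof (rule mvt_ray[OF s, of g "\<lambda>y u. Df (y + s *\<^sub>R w) u - Df y u"])
    fix t assume t: "0 \<le> t" "t \<le> s"
    have in1: "x + t *\<^sub>R v + s *\<^sub>R w \<in> \<Omega>" and in2: "x + t *\<^sub>R v \<in> \<Omega>"
      using inside[OF t, of s] inside[OF t, of 0] s by auto
    have "((\<lambda>y. y + s *\<^sub>R w) has_derivative (\<lambda>h. h)) (at (x + t *\<^sub>R v))"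
      by (auto intro!: derivative_eq_intros)
    from has_derivative_compose[OF this has_derivative_f[OF in1]]
    have "((\<lambda>y. f (y + s *\<^sub>R w)) has_derivative Df (x + t *\<^sub>R v + s *\<^sub>R w)) (at (x + t *\<^sub>R v))"
      by simp
    from has_derivative_diff[OF this has_derivative_f[OF in2]]
    show "(g has_derivative (\<lambda>u. Df (x + t *\<^sub>R v + s *\<^sub>R w) u - Df (x + t *\<^sub>R v) u))
      (at (x + t *\<^sub>R v))"
      unfolding g_def by simp
  qed (simp add: algebra_simps)
  obtain b where b: "0 < b" "b < s"
    and mvt2: "Df (x + a *\<^sub>R v + s *\<^sub>R w) v - Df (x + a *\<^sub>R v) v
      = s * d2 f (x + a *\<^sub>R v + b *\<^sub>R w) v w"
  proof (rule mvt_ray[OF s, of "\<lambda>y. Df y v" "\<lambda>y. d2 f y v" "x + a *\<^sub>R v" w])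
    fix t assume "0 \<le> t" "t \<le> s"
    then show "((\<lambda>y. Df y v) has_derivative d2 f (x + a *\<^sub>R v + t *\<^sub>R w) v)
      (at (x + a *\<^sub>R v + t *\<^sub>R w))"
      using has_derivative_Df inside a by simp
  qed simp
  have "second_difference x v w s = g (x + s *\<^sub>R v) - g x"
    unfolding g_def second_difference_def by (simp add: algebra_simps)
  also have "\<dots> = s * s * d2 f (x + a *\<^sub>R v + b *\<^sub>R w) v w"
    using mvt1 mvt2 by simp
  finally show ?thesis
    using that a b by blast
qed

lemma second_difference_quotient_tendsto:
  assumes x: "x \<in> \<Omega>"
  shows "((\<lambda>s. second_difference x v w s / (s * s)) \<longlongrightarrow> d2 f x v w) (at_right 0)"
proof -
  have "\<forall>\<^sub>F s in at_right 0. \<exists>y\<in>\<Omega>. norm (y - x) \<le> (norm v + norm w) * s \<and>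
      second_difference x v w s / (s * s) = d2 f y v w"
    using eventually_at_right_0_parallelogram_in_open[OF open_domain x, of v w]
      eventually_at_right_less
  proof eventually_elim
    case (elim s)
    then obtain a b where ab: "0 < a" "a < s" "0 < b" "b < s"
      and eq: "second_difference x v w s = s * s * d2 f (x + a *\<^sub>R v + b *\<^sub>R w) v w"
      using second_difference_mvt[OF x, of s v w] by blast
    show ?case
    proof (intro bexI conjI)
      show "norm (x + a *\<^sub>R v + b *\<^sub>R w - x) \<le> (norm v + norm w) * s"
        using norm_scaleR_add_le[of a s b v w] ab by (simp add: add.assoc)
      show "second_difference x v w s / (s * s) = d2 f (x + a *\<^sub>R v + b *\<^sub>R w) v w"
        using eq elim(2) by simp
      show "x + a *\<^sub>R v + b *\<^sub>R w \<in> \<Omega>"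
        using elim(1) ab by simp
    qed
  qed
  then obtain r where "\<forall>\<^sub>F s in at_right 0. second_difference x v w s / (s * s) = r s"
    and "(r \<longlongrightarrow> d2 f x v w) (at_right 0)"
    by (rule obtain_nearby_values_tendsto[OF continuous_d2[OF x]])
  then show ?thesis
    using tendsto_cong[of "\<lambda>s. second_difference x v w s / (s * s)" r] by blast
qed

lemma d2_symmetric:
  assumes x: "x \<in> \<Omega>"
  shows "d2 f x v w = d2 f x w v"
proof -
  have sym: "second_difference x v w s = second_difference x w v s" for s
    by (simp add: second_difference_def algebra_simps)
  show ?thesis
    by (rule tendsto_unique[OF trivial_limit_at_right_real
          second_difference_quotient_tendsto[OF x]])
      (unfold sym, rule second_difference_quotient_tendsto[OF x])
qed

lemma linear_d2_left:
  assumes "x \<in> \<Omega>"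
  shows "linear (\<lambda>v. d2 f x v w)"
proof -
  have "(\<lambda>v. d2 f x v w) = d2 f x w"
    using d2_symmetric[OF assms] by (simp add: fun_eq_iff)
  then show ?thesis
    using linear_d2[OF assms] by simp
qed

lemma ray_second_order_mvt:
  assumes x: "x \<in> Z" and s: "0 < s" and inside: "\<And>t. 0 \<le> t \<Longrightarrow> t \<le> s \<Longrightarrow> x + t *\<^sub>R v \<in> \<Omega>"
  obtains \<xi> \<eta> where "0 < \<xi>" "0 < \<eta>" "\<eta> < s" "f (x + s *\<^sub>R v) = s * \<xi> * d2 f (x + \<eta> *\<^sub>R v) v v"
proof -
  have fx: "f x = 0" and Dfx: "Df x v = 0"
    using x Df_zero[OF x] by (auto simp: zero_set_def)
  obtain \<xi> where \<xi>: "0 < \<xi>" "\<xi> < s" and mvt1: "f (x + s *\<^sub>R v) - f x = s * Df (x + \<xi> *\<^sub>R v) v"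
    using mvt_ray[OF s, of f Df x v] has_derivative_f inside by blast
  obtain \<eta> where \<eta>: "0 < \<eta>" "\<eta> < \<xi>"
    and mvt2: "Df (x + \<xi> *\<^sub>R v) v - Df x v = \<xi> * d2 f (x + \<eta> *\<^sub>R v) v v"
  proof (rule mvt_ray[OF \<xi>(1), of "\<lambda>y. Df y v" "\<lambda>y. d2 f y v" x v])
    fix t assume "0 \<le> t" "t \<le> \<xi>"
    then show "((\<lambda>y. Df y v) has_derivative d2 f (x + t *\<^sub>R v) v) (at (x + t *\<^sub>R v))"
      using has_derivative_Df inside \<xi> by simp
  qed simp
  show ?thesis
    using that[OF \<xi>(1) \<eta>(1)] \<eta> \<xi> mvt1 mvt2 fx Dfx by simp
qed

lemma d2_nonneg:
  assumes x: "x \<in> Z"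
  shows "d2 f x v v \<ge> 0"
proof -
  have x\<Omega>: "x \<in> \<Omega>"
    using x Z_subset by blast
  have "\<forall>\<^sub>F s in at_right 0. \<exists>y\<in>\<Omega>. norm (y - x) \<le> norm v * s \<and> d2 f y v v \<ge> 0"
    using eventually_at_right_0_parallelogram_in_open[OF open_domain x\<Omega>, of v 0]
      eventually_at_right_less
  proof eventually_elim
    case (elim s)
    have inside: "x + t *\<^sub>R v \<in> \<Omega>" if "0 \<le> t" "t \<le> s" for t
      using elim(1)[rule_format, of t 0] that elim(2) by simp
    obtain \<xi> \<eta> where "0 < \<xi>" "0 < \<eta>" "\<eta> < s"
      and eq: "f (x + s *\<^sub>R v) = s * \<xi> * d2 f (x + \<eta> *\<^sub>R v) v v"
      using ray_second_order_mvt[OF x _ inside] elim by blast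
    have "0 < s * \<xi>"
      using elim(2) \<open>0 < \<xi>\<close> by simp
    moreover have "f (x + s *\<^sub>R v) \<ge> 0"
      using nonneg inside[of s] elim by simp
    ultimately have "d2 f (x + \<eta> *\<^sub>R v) v v \<ge> 0"
      using eq by (simp add: zero_le_mult_iff)
    then show ?case
      using inside[of \<eta>] \<open>0 < \<eta>\<close> \<open>\<eta> < s\<close>
      by (intro bexI[of _ "x + \<eta> *\<^sub>R v"]) (simp_all add: mult.commute mult_right_mono)
  qed
  then obtain r where "\<forall>\<^sub>F s in at_right (0::real). r s \<ge> 0" "(r \<longlongrightarrow> d2 f x v v) (at_right 0)"
    by (rule obtain_nearby_values_tendsto[OF continuous_d2[OF x\<Omega>]])
  then show ?thesis
    using tendsto_lowerbound trivial_limit_at_right_real by blast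
qed

definition hess_kernel :: "real^'n \<Rightarrow> (real^'n) set" where
  "hess_kernel x = {v. \<forall>w. d2 f x v w = 0}"

lemma subspace_hess_kernel: "x \<in> \<Omega> \<Longrightarrow> subspace (hess_kernel x)"
  unfolding subspace_def hess_kernel_def
  using linear_add[OF linear_d2_left] linear_scale[OF linear_d2_left] linear_0[OF linear_d2_left]
  by simp

lemma hessian_mult_vec:
  assumes "x \<in> \<Omega>"
  shows "(hessian f x *v v) $ i = d2 f x (axis i 1) v"
  unfolding hessian_def matrix_vector_mult_def
  using linear_eq_sum_axis[OF linear_d2[OF assms, of "axis i 1"], of v] by (simp add: mult.commute)

lemma hessian_mult_vec_eq_0_iff:
  assumes x: "x \<in> \<Omega>"
  shows "hessian f x *v v = 0 \<longleftrightarrow> v \<in> hess_kernel x"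
proof -
  have "(\<forall>i. d2 f x (axis i 1) v = 0) \<longleftrightarrow> (\<forall>w. d2 f x v w = 0)"
  proof
    assume h: "\<forall>i. d2 f x (axis i 1) v = 0"
    show "\<forall>w. d2 f x v w = 0"
    proof
      fix w
      have "d2 f x v w = (\<Sum>i\<in>UNIV. w $ i * d2 f x v (axis i 1))"
        by (rule linear_eq_sum_axis[OF linear_d2[OF x]])
      also have "\<dots> = 0"
        using h d2_symmetric[OF x] by simp
      finally show "d2 f x v w = 0" .
    qed
  qed (metis d2_symmetric[OF x])
  then show ?thesis
    by (simp add: vec_eq_iff hessian_mult_vec[OF x] hess_kernel_def)
qed

lemma rank_hessian:
  assumes x: "x \<in> \<Omega>"
  shows "rank (hessian f x) = CARD('n) - dim (hess_kernel x)"
proof -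
  define H where "H = hessian f x"
  have "transpose H = H"
    by (simp add: H_def hessian_def transpose_def vec_eq_iff d2_symmetric[OF x])
  then have "hess_kernel x = (range ((*v) H))\<^sup>\<bottom>"
    using ker_orthogonal_comp_adjoint[of "(*v) H"] hessian_mult_vec_eq_0_iff[OF x]
    by (auto simp: adjoint_matrix H_def)
  moreover have "subspace (range ((*v) H))"
    by (rule linear_subspace_image[OF matrix_vector_mul_linear subspace_UNIV])
  ultimately have "dim (hess_kernel x) + rank H = CARD('n)"
    using dim_orthogonal_comp_add[of "range ((*v) H)"] by (simp add: rank_dim_range)
  then show ?thesis
    unfolding H_def by simp
qed

text \<open>A nonnegative quadratic form vanishes at \<open>w\<close> only if \<open>w\<close> lies in its kernel.\<close>
lemma d2_pos_orthogonal_comp: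
  assumes x: "x \<in> Z" and w: "w \<in> (hess_kernel x)\<^sup>\<bottom>" "w \<noteq> 0"
  shows "d2 f x w w > 0"
proof (rule ccontr)
  assume "\<not> d2 f x w w > 0"
  then have w0: "d2 f x w w = 0"
    using d2_nonneg[OF x, of w] by simp
  have x\<Omega>: "x \<in> \<Omega>"
    using x Z_subset by blast
  have "d2 f x w u = 0" for u
  proof (rule quadratic_nonneg_imp_linear_coeff_zero)
    fix t
    have "0 \<le> d2 f x (w + t *\<^sub>R u) (w + t *\<^sub>R u)"
      by (rule d2_nonneg[OF x])
    also have "\<dots> = d2 f x w w + t * d2 f x w u + t * d2 f x u w + t * t * d2 f x u u"
      using linear_add[OF linear_d2_left[OF x\<Omega>]] linear_scale[OF linear_d2_left[OF x\<Omega>]]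
        linear_add[OF linear_d2[OF x\<Omega>]] linear_scale[OF linear_d2[OF x\<Omega>]]
      by (simp add: algebra_simps)
    finally show "0 \<le> 2 * t * d2 f x w u + t * t * d2 f x u u"
      using w0 d2_symmetric[OF x\<Omega>, of u w] by simp
  qed (rule d2_nonneg[OF x])
  then have "w \<in> hess_kernel x"
    by (simp add: hess_kernel_def)
  then show False
    using w by (auto simp: orthogonal_comp_def orthogonal_def)
qed

definition grad :: "real^'n \<Rightarrow> real^'n" where
  "grad x = (\<chi> i. Df x (axis i 1))"

lemma has_derivative_grad:
  assumes x: "x \<in> \<Omega>"
  shows "(grad has_derivative (\<lambda>v. hessian f x *v v)) (at x)"
proof -
  have "((\<lambda>x. \<Sum>i\<in>UNIV. Df x (axis i 1) *\<^sub>R axis i 1) has_derivative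
      (\<lambda>v. \<Sum>i\<in>UNIV. d2 f x (axis i 1) v *\<^sub>R axis i 1)) (at x)"
    by (intro has_derivative_sum has_derivative_scaleR_left has_derivative_Df[OF x])
  moreover have "grad = (\<lambda>x. \<Sum>i\<in>UNIV. Df x (axis i 1) *\<^sub>R axis i 1)"
    by (simp add: fun_eq_iff grad_def vec_lambda_eq_sum_axis)
  moreover have "(\<lambda>v. hessian f x *v v) = (\<lambda>v. \<Sum>i\<in>UNIV. d2 f x (axis i 1) v *\<^sub>R axis i 1)"
    by (simp add: fun_eq_iff hessian_mult_vec[OF x] vec_lambda_eq_sum_axis[symmetric] vec_eq_iff)
  ultimately show ?thesis
    by simp
qed

lemma grad_zero: "x \<in> Z \<Longrightarrow> grad x = 0"
  unfolding grad_def using Df_zero by (simp add: vec_eq_iff)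

lemma Ck_on_hessian_mult_vec: "Ck_on UNIV (p - 2) \<Omega> (\<lambda>x. hessian f x *v v)"
proof -
  have "Ck_on UNIV (p - 2) \<Omega> (\<lambda>x. \<chi> i. d2 f x (axis i 1) v)"
    by (rule Ck_on_vec_lambda) (rule Ck_on_d2)
  then show ?thesis
    by (rule Ck_on_cong) (simp add: vec_eq_iff hessian_mult_vec)
qed

text \<open>\<open>\<nabla>f\<close> vanishes on \<open>Z\<close>, so it vanishes along every curve \<open>t \<mapsto> \<phi> (t *\<^sub>R s)\<close> in \<open>Z\<close>;
  differentiating at \<open>t = 0\<close> gives \<open>hessian f x0 *v \<phi>' s = 0\<close>.\<close>
lemma derivative_in_hess_kernel:
  assumes x0: "x0 \<in> Z" and S: "subspace S" and U: "openin (top_of_set S) U" "0 \<in> U"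
    and \<phi>U: "\<phi> ` U \<subseteq> Z" and \<phi>0: "\<phi> 0 = x0"
    and d\<phi>: "(\<phi> has_derivative \<phi>') (at 0 within U)"
    and s: "s \<in> S"
  shows "\<phi>' s \<in> hess_kernel x0"
proof -
  have x0\<Omega>: "x0 \<in> \<Omega>"
    using x0 Z_subset by blast
  define L where "L = {t::real. t *\<^sub>R s \<in> U}"
  have "openin (top_of_set UNIV) (UNIV \<inter> (\<lambda>t. t *\<^sub>R s) -` U)"
    using S s by (intro continuous_openin_preimage[OF _ _ U(1)])
      (auto intro!: continuous_intros subspace_scale)
  then have L: "open L" "0 \<in> L"
    using U(2) by (auto simp: L_def vimage_def)
  have "((\<lambda>t. t *\<^sub>R s) has_derivative (\<lambda>t. t *\<^sub>R s)) (at 0 within L)"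
    by (auto intro!: derivative_eq_intros)
  moreover have "(\<phi> has_derivative \<phi>') (at (0 *\<^sub>R s) within (\<lambda>t. t *\<^sub>R s) ` L)"
    by (rule has_derivative_subset) (use d\<phi> in \<open>auto simp: L_def\<close>)
  ultimately have "((\<lambda>t. \<phi> (t *\<^sub>R s)) has_derivative (\<lambda>t. \<phi>' (t *\<^sub>R s))) (at 0 within L)"
    by (rule diff_chain_within[unfolded o_def])
  from has_derivative_compose[OF this, of grad] has_derivative_grad[OF x0\<Omega>]
  have "((\<lambda>t. grad (\<phi> (t *\<^sub>R s))) has_derivative (\<lambda>t. hessian f x0 *v \<phi>' (t *\<^sub>R s))) (at 0)"
    using at_within_open[OF L(2,1)] \<phi>0 by simp
  moreover have "grad (\<phi> (t *\<^sub>R s)) = 0" if "t \<in> L" for t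
    using that \<phi>U grad_zero by (auto simp: L_def)
  ultimately have "((\<lambda>t. 0) has_derivative (\<lambda>t. hessian f x0 *v \<phi>' (t *\<^sub>R s))) (at (0::real))"
    by (rule has_derivative_transform_within_open[OF _ L(1,2)])
  then have "(\<lambda>t. hessian f x0 *v \<phi>' (t *\<^sub>R s)) = (\<lambda>t. 0)"
    by (rule has_derivative_unique[OF _ has_derivative_const])
  then have "hessian f x0 *v \<phi>' s = 0"
    by (metis scaleR_one)
  then show ?thesis
    using hessian_mult_vec_eq_0_iff[OF x0\<Omega>] by simp
qed

lemma chart_dim_le_hess_kernel:
  assumes x0: "x0 \<in> Z" and c: "is_chart k Z x0 S U V \<phi>"
  shows "dim S \<le> dim (hess_kernel x0)"
proof -
  obtain \<phi>' where d\<phi>: "(\<phi> has_derivative \<phi>') (at 0 within U)" and inj: "inj_on \<phi>' S"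
    using c unfolding is_chart_def by blast
  have c': "subspace S" "openin (top_of_set S) U" "0 \<in> U" "\<phi> ` U \<subseteq> Z" "\<phi> 0 = x0"
    using c unfolding is_chart_def by auto
  have "continuous_on S \<phi>'"
    using linear_continuous_on[OF has_derivative_bounded_linear[OF d\<phi>]] .
  moreover have "\<phi>' \<in> S \<rightarrow> hess_kernel x0"
    using derivative_in_hess_kernel[OF x0 c'(1-3) c'(4,5) d\<phi>] by blast
  ultimately show ?thesis
    using continuous_injective_image_subspace_dim_le[OF c'(1) subspace_hess_kernel] x0 Z_subset inj
    by blast
qed

lemma dim_hess_kernel_eq_chart_dim:
  assumes x0: "x0 \<in> Z" and c: "is_chart k Z x0 S U V \<phi>"
    and T: "subspace T" "dim T = DIM(real^'n) - dim S" "\<forall>v\<in>T. v \<noteq> 0 \<longrightarrow> d2 f x0 v v > 0"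
  shows "dim (hess_kernel x0) = dim S"
proof -
  have x0\<Omega>: "x0 \<in> \<Omega>"
    using x0 Z_subset by blast
  have "T \<inter> hess_kernel x0 \<subseteq> {0}"
    using T(3) by (force simp: hess_kernel_def)
  then have "dim (T \<inter> hess_kernel x0) = 0"
    by simp
  moreover have "dim {x + y |x y. x \<in> T \<and> y \<in> hess_kernel x0} \<le> CARD('n)"
    using dim_subset_UNIV[of "{x + y |x y. x \<in> T \<and> y \<in> hess_kernel x0}"] by simp
  moreover have "dim S \<le> CARD('n)"
    using dim_subset_UNIV[of S] by simp
  moreover have "dim T = CARD('n) - dim S"
    using T(2) by simp
  ultimately show ?thesis
    using dim_sums_Int[OF T(1) subspace_hess_kernel[OF x0\<Omega>]] chart_dim_le_hess_kernel[OF x0 c]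
    by linarith
qed

end

section \<open>Straightening the zero set\<close>

text \<open>With \<open>P\<close> a linear projection onto \<open>K = hess_kernel x0\<close>, the map
  \<open>F x = P (x - x0) + \<nabla>f x\<close> sends \<open>Z\<close> into \<open>K\<close>, and its derivative \<open>P + \<nabla>\<^sup>2f x0\<close> at \<open>x0\<close>
  is injective because the range of the (symmetric) Hessian is orthogonal to \<open>K\<close>.\<close>
locale nonneg_Cp_function_at_zero = nonneg_Cp_function \<Omega> f p
  for \<Omega> :: "(real^'n) set" and f p +
  fixes x0 :: "real^'n" and P :: "real^'n \<Rightarrow> real^'n"
  assumes x0: "x0 \<in> Z" and linear_P: "linear P"
    and P_in_kernel: "\<And>v. P v \<in> hess_kernel x0" and P_id: "\<And>v. v \<in> hess_kernel x0 \<Longrightarrow> P v = v"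
begin

definition F :: "real^'n \<Rightarrow> real^'n" where
  "F x = P (x - x0) + grad x"

definition F' :: "real^'n \<Rightarrow> real^'n \<Rightarrow> real^'n" where
  "F' x v = P v + hessian f x *v v"

lemma x0_in_domain: "x0 \<in> \<Omega>"
  using x0 Z_subset by blast

lemma has_derivative_F:
  assumes "x \<in> \<Omega>"
  shows "(F has_derivative F' x) (at x)"
proof -
  have "((\<lambda>x. P (x - x0)) has_derivative (\<lambda>h. P (h - 0))) (at x)"
    using linear_P linear_conv_bounded_linear
    by (intro bounded_linear.has_derivative[of P] has_derivative_diff has_derivative_ident
        has_derivative_const) auto
  from has_derivative_add[OF this has_derivative_grad[OF assms]]
  show ?thesis
    unfolding F_def[abs_def] F'_def[abs_def] by simp
qed

lemma linear_F': "x \<in> \<Omega> \<Longrightarrow> linear (F' x)"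
  using has_derivative_F has_derivative_linear by blast

lemma Ck_on_F': "Ck_on UNIV (p - 2) \<Omega> (\<lambda>x. F' x v)"
  unfolding F'_def by (intro Ck_on_add Ck_on_const Ck_on_hessian_mult_vec)

lemma F_x0: "F x0 = 0"
  unfolding F_def using grad_zero[OF x0] linear_0[OF linear_P] by simp

lemma F_Z: "x \<in> Z \<Longrightarrow> F x \<in> hess_kernel x0"
  unfolding F_def using grad_zero P_in_kernel by simp

lemma inj_F'_x0: "inj (F' x0)"
proof -
  have "v = 0" if "F' x0 v = 0" for v
  proof -
    have h: "P v = - (hessian f x0 *v v)"
      using that unfolding F'_def by (simp add: eq_neg_iff_add_eq_0)
    have "P v \<bullet> P v = - (P v \<bullet> (hessian f x0 *v v))"
      by (subst (2) h) simp
    also have "P v \<bullet> (hessian f x0 *v v) = 0"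
    proof -
      have "P v \<bullet> (hessian f x0 *v v) = (\<Sum>i\<in>UNIV. P v $ i * d2 f x0 (axis i 1) v)"
        by (simp add: inner_vec_def hessian_mult_vec[OF x0_in_domain])
      also have "\<dots> = d2 f x0 (P v) v"
        by (rule linear_eq_sum_axis[OF linear_d2_left[OF x0_in_domain], symmetric])
      also have "\<dots> = 0"
        using P_in_kernel by (simp add: hess_kernel_def)
      finally show ?thesis .
    qed
    finally have "P v = 0"
      by simp
    then have "v \<in> hess_kernel x0"
      using h hessian_mult_vec_eq_0_iff[OF x0_in_domain] by simp
    then show "v = 0"
      using P_id \<open>P v = 0\<close> by simp
  qed
  then show ?thesis
    using linear_F'[OF x0_in_domain] linear_injective_0 by blast
qed

lemma obtain_blinfun_F':
  obtains Fb where "\<And>x. x \<in> \<Omega> \<Longrightarrow> blinfun_apply (Fb x) = F' x" "continuous_on \<Omega> Fb"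
proof
  define Fb where "Fb x = Blinfun (F' x)" for x
  show Fb: "blinfun_apply (Fb x) = F' x" if "x \<in> \<Omega>" for x
    unfolding Fb_def
    using linear_F'[OF that] bounded_linear_Blinfun_apply linear_conv_bounded_linear by metis
  have "continuous (at x within \<Omega>) Fb" if "x \<in> \<Omega>" for x
  proof (rule continuous_blinfun_componentwiseI1)
    fix i :: "real^'n"
    have "continuous_on \<Omega> (\<lambda>x. blinfun_apply (Fb x) i)"
      using Ck_on_mono[OF Ck_on_F', of 0 i] Fb by (simp cong: continuous_on_cong)
    then show "continuous (at x within \<Omega>) (\<lambda>x. blinfun_apply (Fb x) i)"
      using that by (simp add: continuous_on_eq_continuous_within)
  qed
  then show "continuous_on \<Omega> Fb"
    by (simp add: continuous_on_eq_continuous_within)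
qed

lemma F_local_diffeomorphism:
  obtains U' V g where "open U'" "U' \<subseteq> \<Omega>" "x0 \<in> U'" "open V" "homeomorphism U' V F g"
    "\<And>y. y \<in> V \<Longrightarrow> (g has_derivative inv (F' (g y))) (at y)" "\<And>y. y \<in> V \<Longrightarrow> bij (F' (g y))"
proof -
  obtain Fb where Fb: "\<And>x. x \<in> \<Omega> \<Longrightarrow> blinfun_apply (Fb x) = F' x" and "continuous_on \<Omega> Fb"
    using obtain_blinfun_F' by blast
  obtain L where L: "linear L" "L \<circ> F' x0 = id"
    using linear_injective_left_inverse[OF linear_F'[OF x0_in_domain] inj_F'_x0] by blast
  have "blinfun_apply (Blinfun L) = L"
    using L(1) bounded_linear_Blinfun_apply linear_conv_bounded_linear by metis
  then have "Blinfun L o\<^sub>L Fb x0 = id_blinfun"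
    using L(2) Fb[OF x0_in_domain] by (intro blinfun_eqI) (simp add: fun_eq_iff)
  from inverse_function_theorem[OF open_domain _ \<open>continuous_on \<Omega> Fb\<close> x0_in_domain this, of F]
  obtain U' V g g' where R: "open U'" "U' \<subseteq> \<Omega>" "x0 \<in> U'" "open V" "homeomorphism U' V F g"
    "\<And>y. y \<in> V \<Longrightarrow> (g has_derivative g' y) (at y)"
    "\<And>y. y \<in> V \<Longrightarrow> g' y = inv (blinfun_apply (Fb (g y)))"
    "\<And>y. y \<in> V \<Longrightarrow> bij (blinfun_apply (Fb (g y)))"
    using has_derivative_F Fb by metis
  have g\<Omega>: "g y \<in> \<Omega>" if "y \<in> V" for y
    using R(2,5) that unfolding homeomorphism_def by blast
  show ?thesis
  proof (rule that[OF R(1-5)])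
    fix y assume y: "y \<in> V"
    show "(g has_derivative inv (F' (g y))) (at y)"
      using R(6,7)[OF y] Fb[OF g\<Omega>[OF y]] by simp
    show "bij (F' (g y))"
      using R(8)[OF y] Fb[OF g\<Omega>[OF y]] by simp
  qed
qed

lemma F_local_inverse:
  obtains U' V g where "open U'" "U' \<subseteq> \<Omega>" "x0 \<in> U'" "open V" "homeomorphism U' V F g"
    "Ck_on UNIV (p - 1) V g" "(g has_derivative inv (F' x0)) (at 0)" "inj (inv (F' x0))"
proof -
  obtain U' V g where U': "open U'" "U' \<subseteq> \<Omega>" "x0 \<in> U'" and V: "open V"
    and hom: "homeomorphism U' V F g"
    and dg: "\<And>y. y \<in> V \<Longrightarrow> (g has_derivative inv (F' (g y))) (at y)"
    and bij: "\<And>y. y \<in> V \<Longrightarrow> bij (F' (g y))"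
    using F_local_diffeomorphism by blast
  have gF: "\<And>x. x \<in> U' \<Longrightarrow> g (F x) = x" and FU': "F ` U' = V"
    using hom by (auto simp: homeomorphism_def)
  have lin: "linear (F' x)" if "x \<in> U'" for x
    using linear_F' U'(2) that by blast
  have bij': "bij (F' x)" if "x \<in> U'" for x
    using bij[of "F x"] gF[OF that] FU' that by auto
  have "Ck_on UNIV (p - 2) U' (\<lambda>x. F' x v)" for v
    using Ck_on_subset[OF Ck_on_F' order_refl U'(2)] .
  from Ck_on_inverse_function[OF U'(1) hom dg lin bij' this]
  have "Ck_on UNIV (Suc (p - 2)) V g" .
  moreover have "Suc (p - 2) = p - 1"
    using p_ge_2 by simp
  moreover have "0 \<in> V" "g 0 = x0"
    using FU' U'(3) gF F_x0 by force+
  ultimately show ?thesis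
    using that[OF U' V hom] dg bij by (metis bij_imp_bij_inv bij_is_inj)
qed

lemma hess_kernel_chart:
  fixes S :: "(real^'n) set"
  assumes S: "subspace S" "openin (top_of_set S) U" and "0 \<in> U"
    and \<phi>: "continuous_on U \<phi>" "inj_on \<phi> U" "\<phi> ` U \<subseteq> Z" "\<phi> 0 = x0"
    and dim: "dim (hess_kernel x0) \<le> dim S"
  shows "\<exists>A Ob g. is_chart (p - 1) Z x0 (hess_kernel x0) A Ob g"
proof -
  let ?K = "hess_kernel x0"
  obtain U' V g where U': "open U'" "U' \<subseteq> \<Omega>" "x0 \<in> U'" and V: "open V"
    and hom: "homeomorphism U' V F g" and g: "Ck_on UNIV (p - 1) V g"
    "(g has_derivative inv (F' x0)) (at 0)" "inj (inv (F' x0))"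
    by (rule F_local_inverse)
  have FZ: "F ` (Z \<inter> U') \<subseteq> ?K"
    using F_Z by blast
  have "openin (top_of_set ?K) (F ` (\<phi> ` U \<inter> U'))"
    using hom \<phi> FZ
    by (intro openin_image_compose_injective[OF S \<phi>(1,2) U'(1) _ _
          subspace_hess_kernel[OF x0_in_domain] _ dim])
      (auto simp: homeomorphism_def intro: inj_on_inverseI)
  then obtain Q where Q: "open Q" "F ` (\<phi> ` U \<inter> U') = ?K \<inter> Q"
    by (auto simp: openin_open)
  have "0 \<in> Q"
    using Q(2) \<phi>(4) \<open>0 \<in> U\<close> U'(3) F_x0 by (metis IntD2 IntI image_eqI)
  moreover have "?K \<inter> Q \<subseteq> F ` (Z \<inter> U')"
    using Q(2) \<phi>(3) by blast
  ultimately have "is_chart (p - 1) Z x0 ?K (?K \<inter> V \<inter> Q) (U' \<inter> F -` Q) g"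
    using is_chart_straightening[OF subspace_hess_kernel[OF x0_in_domain] hom U'(1) V Q(1) _ _ FZ
        U'(3) F_x0 g(1,2)] g(3) inj_on_subset by blast
  then show ?thesis
    by blast
qed

end

section \<open>Kernel charts and the main equivalence\<close>

context nonneg_Cp_function
begin

lemma hess_kernel_chart_exists:
  fixes S :: "(real^'n) set"
  assumes x0: "x0 \<in> Z" and S: "subspace S" and U: "openin (top_of_set S) U" "0 \<in> U"
    and \<phi>: "continuous_on U \<phi>" "inj_on \<phi> U" "\<phi> ` U \<subseteq> Z" "\<phi> 0 = x0"
    and dim: "dim (hess_kernel x0) \<le> dim S"
  shows "\<exists>A Ob g. is_chart (p - 1) Z x0 (hess_kernel x0) A Ob g"
proof -
  obtain P where P: "linear P" "\<And>v. P v \<in> hess_kernel x0" "\<And>v. v \<in> hess_kernel x0 \<Longrightarrow> P v = v"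
    using obtain_linear_projection[OF subspace_hess_kernel] x0 Z_subset by blast
  interpret nonneg_Cp_function_at_zero \<Omega> f p x0 P
    using x0 P by (intro nonneg_Cp_function_at_zero.intro nonneg_Cp_function_axioms
        nonneg_Cp_function_at_zero_axioms.intro)
  show ?thesis
    by (rule hess_kernel_chart[OF S U \<phi> dim])
qed

lemma chart_imp_hess_kernel_chart:
  assumes x0: "x0 \<in> Z" and c: "is_chart k N x0 S U V \<phi>" and N: "N \<subseteq> Z"
    and dim: "dim (hess_kernel x0) \<le> dim S"
  shows "\<exists>A Ob g. is_chart (p - 1) Z x0 (hess_kernel x0) A Ob g"
proof -
  obtain \<psi> where h: "homeomorphism U (\<phi> ` U) \<phi> \<psi>"
    using c unfolding is_chart_def by blast
  have "continuous_on U \<phi>"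
    by (rule homeomorphism_cont1[OF h])
  moreover have "inj_on \<phi> U"
    using homeomorphism_apply1[OF h] by (metis inj_onI)
  moreover have "subspace S" "openin (top_of_set S) U" "0 \<in> U" "\<phi> ` U \<subseteq> Z" "\<phi> 0 = x0"
    using c N unfolding is_chart_def by auto
  ultimately show ?thesis
    using hess_kernel_chart_exists[OF x0 _ _ _ _ _ _ _ dim] by simp
qed

definition kernel_charts :: bool where
  "kernel_charts \<longleftrightarrow> (\<forall>x0\<in>Z. \<exists>A Ob g. is_chart (p - 1) Z x0 (hess_kernel x0) A Ob g)"

lemma kernel_charts_imp_submanifold:
  assumes kernel_charts and "k \<le> p - 1"
  shows "submanifold k Z"
  unfolding submanifold_def
proof
  fix x assume "x \<in> Z"
  then obtain A Ob g where "is_chart (p - 1) Z x (hess_kernel x) A Ob g"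
    using assms(1) unfolding kernel_charts_def by blast
  then show "\<exists>S U V \<phi>. is_chart k Z x S U V \<phi>"
    using is_chart_mono assms(2) by blast
qed

lemma kernel_charts_imp_positive_normally:
  assumes kernel_charts
  shows "positive_normally k f Z"
  unfolding positive_normally_def
proof (intro conjI ballI allI impI)
  fix x assume "x \<in> Z"
  then show "(f has_derivative (\<lambda>v. 0)) (at x)"
    using has_derivative_f Df_zero Z_subset by force
next
  fix x0 d0 assume x0: "x0 \<in> Z" and "local_dim_is k Z x0 d0"
  then obtain S U V \<phi> where c: "is_chart k Z x0 S U V \<phi>" and d0: "dim S = d0"
    unfolding local_dim_is_def by blast
  obtain A Ob g where c': "is_chart (p - 1) Z x0 (hess_kernel x0) A Ob g"
    using assms x0 unfolding kernel_charts_def by blast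
  have "d0 = dim (hess_kernel x0)"
    using is_chart_dim_eq[OF c c'] is_chart_center[OF c] is_chart_center[OF c'] d0 by blast
  moreover have "dim ((hess_kernel x0)\<^sup>\<bottom>) + dim (hess_kernel x0) = DIM(real^'n)"
    using dim_orthogonal_comp_add subspace_hess_kernel x0 Z_subset by blast
  ultimately show "\<exists>T. subspace T \<and> dim T = DIM(real^'n) - d0 \<and> (\<forall>v\<in>T. v \<noteq> 0 \<longrightarrow> d2 f x0 v v > 0)"
    using subspace_orthogonal_comp d2_pos_orthogonal_comp[OF x0]
    by (intro exI[of _ "(hess_kernel x0)\<^sup>\<bottom>"]) auto
qed

lemma positive_normally_imp_kernel_charts:
  assumes sm: "submanifold k Z" and pn: "positive_normally k f Z"
  shows kernel_charts
  unfolding kernel_charts_def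
proof
  fix x0 assume x0: "x0 \<in> Z"
  obtain S U V \<phi> where c: "is_chart k Z x0 S U V \<phi>"
    using sm x0 unfolding submanifold_def by blast
  then have "local_dim_is k Z x0 (dim S)"
    unfolding local_dim_is_def by blast
  with pn x0 obtain T where "subspace T" "dim T = DIM(real^'n) - dim S"
    "\<forall>v\<in>T. v \<noteq> 0 \<longrightarrow> d2 f x0 v v > 0"
    unfolding positive_normally_def by blast
  then have "dim (hess_kernel x0) = dim S"
    by (rule dim_hess_kernel_eq_chart_dim[OF x0 c])
  then show "\<exists>A Ob g. is_chart (p - 1) Z x0 (hess_kernel x0) A Ob g"
    using chart_imp_hess_kernel_chart[OF x0 c order_refl] by simp
qed

lemma normal_hessian_imp_kernel_charts:
  assumes "\<forall>x0\<in>Z. normal_hessian_at \<Omega> f x0"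
  shows kernel_charts
  unfolding kernel_charts_def
proof
  fix x0 assume x0: "x0 \<in> Z"
  obtain d0 k N where N: "submanifold k N" "\<forall>y\<in>N. local_dim_is k N y d0" "x0 \<in> N" "N \<subseteq> Z"
    and rank: "rank (hessian f x0) = CARD('n) - d0" and "d0 \<le> CARD('n)"
    using assms x0 unfolding normal_hessian_at_def by blast
  obtain S U V \<phi> where c: "is_chart k N x0 S U V \<phi>" and "dim S = d0"
    using N(2,3) unfolding local_dim_is_def by blast
  moreover have "dim (hess_kernel x0) \<le> CARD('n)"
    using dim_subset_UNIV[of "hess_kernel x0"] by simp
  ultimately have "dim (hess_kernel x0) = dim S"
    using rank rank_hessian x0 Z_subset \<open>d0 \<le> CARD('n)\<close> by auto
  then show "\<exists>A Ob g. is_chart (p - 1) Z x0 (hess_kernel x0) A Ob g"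
    using chart_imp_hess_kernel_chart[OF x0 c N(4)] by simp
qed

text \<open>\<open>Z\<close> itself may have components of different dimensions, so the manifold \<open>N\<close> required
  by the normal Hessian condition is the piece of \<open>Z\<close> inside the domain of one kernel chart.\<close>
lemma kernel_charts_imp_normal_hessian:
  assumes kc: kernel_charts and x0: "x0 \<in> Z"
  shows "normal_hessian_at \<Omega> f x0"
proof -
  obtain A Ob g where c: "is_chart (p - 1) Z x0 (hess_kernel x0) A Ob g"
    using kc x0 unfolding kernel_charts_def by blast
  have Ob: "open Ob"
    using c unfolding is_chart_def by blast
  have local_dim: "local_dim_is (p - 1) (Z \<inter> Ob) y (dim (hess_kernel x0))" if y: "y \<in> Z \<inter> Ob" for y
  proof -
    obtain A' Ob' g' where c': "is_chart (p - 1) Z y (hess_kernel y) A' Ob' g'"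
      using kc y unfolding kernel_charts_def by blast
    have "dim (hess_kernel y) = dim (hess_kernel x0)"
      using is_chart_dim_eq[OF c' c] is_chart_center[OF c'] y by blast
    then show ?thesis
      unfolding local_dim_is_def using is_chart_restrict[OF c' Ob] y by blast
  qed
  then have "submanifold (p - 1) (Z \<inter> Ob)"
    unfolding submanifold_def local_dim_is_def by blast
  moreover have "x0 \<in> Z \<inter> Ob"
    using is_chart_center[OF c] .
  moreover have "rank (hessian f x0) = CARD('n) - dim (hess_kernel x0)"
    using rank_hessian x0 Z_subset by blast
  moreover have "dim (hess_kernel x0) \<le> CARD('n)" "p - 1 \<ge> 1"
    using dim_subset_UNIV[of "hess_kernel x0"] p_ge_2 by auto
  ultimately show ?thesis
    unfolding normal_hessian_at_def using local_dim by blast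
qed

lemma submanifold_positive_normally_iff_kernel_charts:
  assumes "k \<le> p - 1"
  shows "submanifold k Z \<and> positive_normally k f Z \<longleftrightarrow> kernel_charts"
  using assms kernel_charts_imp_submanifold kernel_charts_imp_positive_normally
    positive_normally_imp_kernel_charts by blast

end

theorem lemma2p7:
  fixes \<Omega> :: "(real^'n) set" and f :: "real^'n \<Rightarrow> real" and p :: nat
  assumes "p \<ge> 2" and "open \<Omega>" and "\<forall>x\<in>\<Omega>. f x \<ge> 0" and "Ck_on UNIV p \<Omega> f"
  shows "((\<forall>x0\<in>zero_set \<Omega> f. normal_hessian_at \<Omega> f x0) \<longleftrightarrow>
            (submanifold 1 (zero_set \<Omega> f) \<and> positive_normally 1 f (zero_set \<Omega> f)))
       \<and> ((submanifold 1 (zero_set \<Omega> f) \<and> positive_normally 1 f (zero_set \<Omega> f)) \<longleftrightarrow>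
            (submanifold (p - 1) (zero_set \<Omega> f) \<and> positive_normally (p - 1) f (zero_set \<Omega> f)))"
proof -
  interpret nonneg_Cp_function \<Omega> f p
    using assms by unfold_locales
  have "(\<forall>x0\<in>Z. normal_hessian_at \<Omega> f x0) \<longleftrightarrow> kernel_charts"
    using normal_hessian_imp_kernel_charts kernel_charts_imp_normal_hessian by blast
  moreover have "submanifold 1 Z \<and> positive_normally 1 f Z \<longleftrightarrow> kernel_charts"
    using submanifold_positive_normally_iff_kernel_charts assms(1) by simp
  moreover have "submanifold (p - 1) Z \<and> positive_normally (p - 1) f Z \<longleftrightarrow> kernel_charts"
    using submanifold_positive_normally_iff_kernel_charts by simp
  ultimately show ?thesis
    by blast
qed

end
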